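(* Let $A,B$ be Pareto sets of size $n$ each and let $k$ be the size of their Pareto sum. The Successive Sweep Search algorithm computes the Pareto sum of $A$ and $B$ in $\mathcal{O}(n\log n+nk)$ time using $\mathcal{O}(n+k)$ space.
   Context: For $p,p'\in\mathbb{R}^2$, $p$ dominates $p'$ if $p\neq p'$, $p.x\le p'.x$ and $p.y\le p'.y$. A Pareto set is a set $S\subset\mathbb{R}^2$ in which no point dominates another. The Successive Sweep Search algorithm first sorts $A$ and $B$ lexicographically ($S_i$ = element of rank $i$) and uses the Minkowski matrix $M_{ij}=A_i+B_j$ (computed on demand). The Pareto sum $C$ is the set of entries of $M$ not dominated by any entry of $M$. Starting with $C=\{M_{11},M_{nn}\}$ and search range $[x_{\min},x_{\max})\times[y_{\min},y_{\max})$ with $x_{\min}=M_{11}.x$, $x_{\max}=M_{nn}.x$, $y_{\min}=M_{nn}.y$, $y_{\max}=M_{11}.y$, it repeatedly finds the lexicographically smallest entry $m$ of $M$ in the current range; if none exists it stops, otherwise it adds $m$ to $C$ and sets $x_{\min}=m.x$, $y_{\max}=m.y$. The range minimum is found by a single left-to-right sweep: keep a row index $i$, starting at $i=n$ in column $1$; in each column $j$, move upward as long as $i\ge2$ and $M_{i-1,j}$ satisfies $x\ge x_{\min}$ and $y<y_{\max}$; if $M_{ij}$ lies in the range and is lexicographically smaller than the current candidate, it becomes the candidate; then move to column $j+1$ with the same $i$; after the last column the candidate is returned. *)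

theory Defs
  imports Complex_Main "HOL-Library.Product_Lexorder"
begin

type_synonym point = "real \<times> real"

text \<open>The product type carries the lexicographic order (HOL-Library.Product_Lexorder),
  so p < q on points is the lexicographic order used by the paper.\<close>

definition padd :: "point \<Rightarrow> point \<Rightarrow> point" where
  "padd p q = (fst p + fst q, snd p + snd q)"

definition dominates :: "point \<Rightarrow> point \<Rightarrow> bool" where
  "dominates p q \<longleftrightarrow> p \<noteq> q \<and> fst p \<le> fst q \<and> snd p \<le> snd q"

definition is_pareto :: "point set \<Rightarrow> bool" where
  "is_pareto S \<longleftrightarrow> (\<forall>p\<in>S. \<forall>q\<in>S. \<not> dominates p q)"

definition minkowski_sum :: "point set \<Rightarrow> point set \<Rightarrow> point set" where
  "minkowski_sum A B = {padd a b | a b. a \<in> A \<and> b \<in> B}"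

definition pareto_sum :: "point set \<Rightarrow> point set \<Rightarrow> point set" where
  "pareto_sum A B = {c \<in> minkowski_sum A B. \<not> (\<exists>d\<in>minkowski_sum A B. dominates d c)}"

text \<open>Each function returns its result together with a step count (time);
  msort_space gives the peak number of stored list cells during merge sort.\<close>

fun merge_c :: "point list \<Rightarrow> point list \<Rightarrow> point list \<times> nat" where
  "merge_c [] ys = (ys, length ys + 1)"
| "merge_c xs [] = (xs, length xs + 1)"
| "merge_c (x # xs) (y # ys) =
     (if x \<le> y then (let (zs, c) = merge_c xs (y # ys) in (x # zs, c + 1))
      else (let (zs, c) = merge_c (x # xs) ys in (y # zs, c + 1)))"

fun msort_c :: "point list \<Rightarrow> point list \<times> nat" where
  "msort_c xs =
     (if length xs \<le> 1 then (xs, 1)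
      else (let (l, c1) = msort_c (take (length xs div 2) xs);
                (r, c2) = msort_c (drop (length xs div 2) xs);
                (m, c3) = merge_c l r
            in (m, c1 + c2 + c3 + length xs)))"

fun msort_space :: "point list \<Rightarrow> nat" where
  "msort_space xs =
     (if length xs \<le> 1 then 1
      else max (length xs + max (msort_space (take (length xs div 2) xs))
                                (msort_space (drop (length xs div 2) xs)))
               (3 * length xs))"

section \<open>Successive Sweep Search (0-based indices)\<close>

definition in_range :: "real \<Rightarrow> real \<Rightarrow> real \<Rightarrow> real \<Rightarrow> point \<Rightarrow> bool" where
  "in_range xmin xmax ymin ymax p \<longleftrightarrow>
     xmin \<le> fst p \<and> fst p < xmax \<and> ymin \<le> snd p \<and> snd p < ymax"

fun climb :: "(nat \<Rightarrow> nat \<Rightarrow> point) \<Rightarrow> nat \<Rightarrow> real \<Rightarrow> real \<Rightarrow> nat \<Rightarrow> nat \<times> nat" where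
  "climb M j xmin ymax 0 = (0, 0)"
| "climb M j xmin ymax (Suc i) =
     (if xmin \<le> fst (M i j) \<and> snd (M i j) < ymax
      then (let (i', c) = climb M j xmin ymax i in (i', c + 1))
      else (Suc i, 0))"

fun sweep :: "(nat \<Rightarrow> nat \<Rightarrow> point) \<Rightarrow> real \<Rightarrow> real \<Rightarrow> real \<Rightarrow> real \<Rightarrow> nat list
              \<Rightarrow> nat \<Rightarrow> point option \<Rightarrow> point option \<times> nat" where
  "sweep M xmin xmax ymin ymax [] i cand = (cand, 1)"
| "sweep M xmin xmax ymin ymax (j # js) i cand =
     (let (i', c1) = climb M j xmin ymax i;
          p = M i' j;
          cand' = (if in_range xmin xmax ymin ymax p \<and>
                      (case cand of None \<Rightarrow> True | Some q \<Rightarrow> p < q)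
                   then Some p else cand);
          (r, c2) = sweep M xmin xmax ymin ymax js i' cand'
      in (r, c1 + c2 + 1))"

definition range_min :: "(nat \<Rightarrow> nat \<Rightarrow> point) \<Rightarrow> nat \<Rightarrow> real \<Rightarrow> real \<Rightarrow> real \<Rightarrow> real
                          \<Rightarrow> point option \<times> nat" where
  "range_min M n xmin xmax ymin ymax = sweep M xmin xmax ymin ymax [0..<n] (n - 1) None"

text \<open>State: current xmin, ymax, the list C found so far, elapsed time,
  and peak space so far (2n matrix-defining points, the points of C, and a constant
  number of working variables).\<close>
partial_function (tailrec) sss_loop ::
  "(nat \<Rightarrow> nat \<Rightarrow> point) \<Rightarrow> nat \<Rightarrow> real \<Rightarrow> real \<Rightarrow> real \<Rightarrow> real \<Rightarrow> point list
   \<Rightarrow> nat \<Rightarrow> nat \<Rightarrow> point list \<times> nat \<times> nat" where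
  "sss_loop M n xmax ymin xmin ymax C t s =
     (let s' = max s (2 * n + length C + 8);
          (r, c) = range_min M n xmin xmax ymin ymax
      in case r of
           None \<Rightarrow> (C, t + c + 1, s')
         | Some m \<Rightarrow> sss_loop M n xmax ymin (fst m) (snd m) (m # C) (t + c + 1) s')"

definition sss :: "point list \<Rightarrow> point list \<Rightarrow> point list \<times> nat \<times> nat" where
  "sss as bs =
     (let (sa, ta) = msort_c as;
          (sb, tb) = msort_c bs;
          n = length sa;
          M = (\<lambda>i j. padd (sa ! i) (sb ! j));
          m11 = M 0 0;
          mnn = M (n - 1) (n - 1);
          (C, t, s) = sss_loop M n (fst mnn) (snd mnn) (fst m11) (snd m11) [m11, mnn] 0 0
      in (C, ta + tb + t + 1,
          max (max (msort_space as + length bs) (length sa + msort_space bs)) s))"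

definition sss_output :: "point list \<Rightarrow> point list \<Rightarrow> point list" where
  "sss_output as bs = fst (sss as bs)"

definition sss_time :: "point list \<Rightarrow> point list \<Rightarrow> nat" where
  "sss_time as bs = fst (snd (sss as bs))"

definition sss_space :: "point list \<Rightarrow> point list \<Rightarrow> nat" where
  "sss_space as bs = snd (snd (sss as bs))"

end

theory Submission
  imports Defs "HOL-Library.Multiset"
begin

text \<open>
  Sorted lexicographically, a Pareto set has strictly increasing x- and strictly decreasing
  y-coordinates, so in the Minkowski matrix \<open>M i j = A\<^sub>i + B\<^sub>j\<close> both coordinates are strictly
  monotone along rows and columns. Consequently the entries passing the climbing test of a
  column form an upward-closed block of rows, the topmost of which is the lexicographically
  least in-range entry of that column and is a valid starting row for the next column:
  one sweep finds the range minimum after at most \<open>2n\<close> steps. A range minimum is never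
  dominated (a dominator would lie in the range and be smaller, or would dominate the
  previously found point), and moving the range corner to it removes exactly this point
  from the Pareto points still in the range. Hence the loop performs \<open>k + 1\<close> sweeps, for
  \<open>O(nk)\<close> time after the \<open>O(n log n)\<close> merge sorts, and stores only the \<open>2n\<close> input points,
  the \<open>k\<close> output points and a constant number of variables.
\<close>

section \<open>Merge sort with step counting\<close>

lemma merge_c_mset: "mset (fst (merge_c xs ys)) = mset xs + mset ys"
  by (induction xs ys rule: merge_c.induct) (auto split: prod.splits)

lemma merge_c_cost: "snd (merge_c xs ys) = length xs + length ys + 1"
  by (induction xs ys rule: merge_c.induct) (auto split: prod.splits)

lemma set_merge_c: "set (fst (merge_c xs ys)) = set xs \<union> set ys"
  by (metis merge_c_mset set_mset_mset set_mset_union)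

lemma sorted_merge_c: "sorted xs \<Longrightarrow> sorted ys \<Longrightarrow> sorted (fst (merge_c xs ys))"
proof (induction xs ys rule: merge_c.induct)
  case (3 x xs y ys)
  have "\<forall>z \<in> set xs \<union> set (y # ys). x \<le> z" if "x \<le> y"
    using 3(3,4) that by (auto intro: order.trans)
  moreover have "\<forall>z \<in> set (x # xs) \<union> set ys. y \<le> z" if "\<not> x \<le> y"
    using 3(3,4) that by (auto intro: order.trans)
  ultimately show ?case
    using 3 set_merge_c[of xs "y # ys"] set_merge_c[of "x # xs" ys]
    by (auto split: prod.split)
qed simp_all

declare msort_c.simps[simp del] msort_space.simps[simp del]

lemma msort_c_short: "length xs \<le> 1 \<Longrightarrow> msort_c xs = (xs, 1)"
  by (subst msort_c.simps) simp

lemma msort_c_split: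
  assumes "\<not> length xs \<le> 1"
    and "msort_c (take (length xs div 2) xs) = (l, c1)"
    and "msort_c (drop (length xs div 2) xs) = (r, c2)"
  shows "msort_c xs = (fst (merge_c l r), c1 + c2 + snd (merge_c l r) + length xs)"
  using assms by (subst msort_c.simps) (simp split: prod.split)

lemma msort_c_mset: "mset (fst (msort_c xs)) = mset xs"
proof (induction xs rule: msort_c.induct)
  case (1 xs)
  show ?case
  proof (cases "length xs \<le> 1")
    case False
    obtain l c1 r c2 where l: "msort_c (take (length xs div 2) xs) = (l, c1)"
      and r: "msort_c (drop (length xs div 2) xs) = (r, c2)"
      by fastforce
    have "mset l + mset r = mset xs"
      using 1(1)[OF False] 1(2)[OF False l[symmetric] refl] l r
      by (simp flip: mset_append)
    then show ?thesis
      using msort_c_split[OF False l r] by (simp add: merge_c_mset)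
  qed (simp add: msort_c_short)
qed

lemma sorted_msort_c: "sorted (fst (msort_c xs))"
proof (induction xs rule: msort_c.induct)
  case (1 xs)
  show ?case
  proof (cases "length xs \<le> 1")
    case True
    then show ?thesis by (simp add: msort_c_short sorted01)
  next
    case False
    obtain l c1 r c2 where l: "msort_c (take (length xs div 2) xs) = (l, c1)"
      and r: "msort_c (drop (length xs div 2) xs) = (r, c2)"
      by fastforce
    show ?thesis
      using 1(1)[OF False] 1(2)[OF False l[symmetric] refl] l r msort_c_split[OF False l r]
      by (simp add: sorted_merge_c)
  qed
qed

lemma length_msort_c: "length (fst (msort_c xs)) = length xs"
  by (metis msort_c_mset size_mset)

lemma msort_c_cost:
  "1 \<le> length xs \<Longrightarrow> length xs \<le> 2 ^ d \<Longrightarrow> snd (msort_c xs) \<le> 4 * length xs * (d + 1)"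
proof (induction xs arbitrary: d rule: msort_c.induct)
  case (1 xs)
  show ?case
  proof (cases "length xs \<le> 1")
    case True
    then show ?thesis using 1(3) by (simp add: msort_c_short)
  next
    case False
    let ?h = "length xs div 2"
    obtain l c1 r c2 where l: "msort_c (take ?h xs) = (l, c1)"
      and r: "msort_c (drop ?h xs) = (r, c2)"
      by fastforce
    obtain d' where d: "d = Suc d'"
      using False 1(4) by (cases d) auto
    have halves: "1 \<le> ?h" "?h \<le> 2 ^ d'" "1 \<le> length xs - ?h" "length xs - ?h \<le> 2 ^ d'"
      using False 1(4) d by auto
    have "c1 \<le> 4 * ?h * d"
      using 1(1)[OF False, of d'] halves l d by simp
    moreover have "c2 \<le> 4 * (length xs - ?h) * d"
      using 1(2)[OF False l[symmetric] refl, of d'] halves r d by simp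
    moreover have "snd (merge_c l r) = length xs + 1"
      using merge_c_cost[of l r] length_msort_c[of "take ?h xs"] length_msort_c[of "drop ?h xs"] l r
        False by simp
    moreover have "4 * ?h * d + 4 * (length xs - ?h) * d = 4 * length xs * d"
      by (simp flip: add_mult_distrib add_mult_distrib2)
    ultimately show ?thesis
      using msort_c_split[OF False l r] False by simp
  qed
qed

lemma msort_space_le: "1 \<le> length xs \<Longrightarrow> msort_space xs \<le> 3 * length xs"
proof (induction xs rule: msort_space.induct)
  case (1 xs)
  show ?case
  proof (cases "length xs \<le> 1")
    case True
    then show ?thesis using 1(3) by (subst msort_space.simps) simp
  next
    case False
    have "msort_space (take (length xs div 2) xs) \<le> 3 * (length xs div 2)"
      and "msort_space (drop (length xs div 2) xs) \<le> 3 * (length xs - length xs div 2)"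
      using 1(1,2)[OF False] False by auto
    then show ?thesis
      using False by (subst msort_space.simps) auto
  qed
qed

lemma msort_c_sorts:
  assumes "distinct xs" "msort_c xs = (ys, c)"
  shows "sorted ys" "distinct ys" "set ys = set xs" "length ys = length xs"
proof -
  have mset: "mset ys = mset xs"
    using msort_c_mset[of xs] assms(2) by simp
  show "sorted ys"
    using sorted_msort_c[of xs] assms(2) by simp
  show "distinct ys"
    using mset_eq_imp_distinct_iff[OF mset] assms(1) by simp
  show "set ys = set xs"
    using mset by (metis set_mset_mset)
  show "length ys = length xs"
    using mset by (metis size_mset)
qed

lemma pareto_less_imp:
  assumes "is_pareto S" "a \<in> S" "b \<in> S" "a < b"
  shows "fst a < fst b \<and> snd b < snd a"
  using assms unfolding is_pareto_def dominates_def less_prod_def' by (cases a, cases b) force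

lemma sorted_pareto_nth_less:
  assumes "sorted xs" "distinct xs" "is_pareto (set xs)" "i < i'" "i' < length xs"
  shows "fst (xs ! i) < fst (xs ! i') \<and> snd (xs ! i') < snd (xs ! i)"
proof -
  have "xs ! i < xs ! i'"
    using assms by (simp add: less_le nth_eq_iff_index_eq sorted_iff_nth_mono)
  then show ?thesis
    using pareto_less_imp[OF assms(3)] assms(4,5) by simp
qed

definition Min_opt :: "'a::linorder set \<Rightarrow> 'a option" where
  "Min_opt S = (if S = {} then None else Some (Min S))"

lemma Min_opt_set_option [simp]: "Min_opt (set_option x) = x"
  by (cases x) (simp_all add: Min_opt_def)

lemma Min_opt_eq_Some_iff:
  "finite S \<Longrightarrow> Min_opt S = Some m \<longleftrightarrow> m \<in> S \<and> (\<forall>q\<in>S. m \<le> q)"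
  by (auto simp: Min_opt_def intro: Min_eqI Min_in)

lemma Min_opt_Un:
  assumes "finite A" "finite B"
  shows "Min_opt (set_option (Min_opt A) \<union> B) = Min_opt (A \<union> B)"
  using assms by (cases "B = {}") (auto simp: Min_opt_def Min_Un)

lemma candidate_update_eq_Min_opt:
  "(if P p \<and> (case cand of None \<Rightarrow> True | Some q \<Rightarrow> p < q) then Some p else cand)
    = Min_opt (set_option cand \<union> ({p} \<inter> Collect P))"
  by (cases cand; cases "P p") (auto simp: Min_opt_def min_def)

section \<open>Sweeping a sorted Pareto matrix\<close>

definition in_quadrant :: "real \<Rightarrow> real \<Rightarrow> point \<Rightarrow> bool" where
  "in_quadrant xmin ymax p \<longleftrightarrow> xmin \<le> fst p \<and> snd p < ymax"

lemma climb_result: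
  "climb M j xmin ymax i = (i', c) \<Longrightarrow>
    i' \<le> i \<and> c = i - i' \<and> (\<forall>r. i' \<le> r \<and> r < i \<longrightarrow> in_quadrant xmin ymax (M r j)) \<and>
    (i' = 0 \<or> \<not> in_quadrant xmin ymax (M (i' - 1) j))"
  by (induction i arbitrary: i' c)
    (auto simp: in_quadrant_def less_Suc_eq split: prod.splits if_splits)

lemma sss_loop_unfold:
  assumes "range_min M n xmin xmax ymin ymax = (r, c)"
  shows "sss_loop M n xmax ymin xmin ymax C t s =
    (case r of
      None \<Rightarrow> (C, t + c + 1, max s (2 * n + length C + 8))
    | Some m \<Rightarrow> sss_loop M n xmax ymin (fst m) (snd m) (m # C) (t + c + 1)
                  (max s (2 * n + length C + 8)))"
  using assms by (subst sss_loop.simps) (simp add: Let_def)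

locale sorted_pareto_matrix =
  fixes M :: "nat \<Rightarrow> nat \<Rightarrow> point" and n :: nat
  assumes n_pos: "0 < n"
    and M_strict_mono: "\<lbrakk>i \<le> i'; j \<le> j'; (i, j) \<noteq> (i', j'); i' < n; j' < n\<rbrakk> \<Longrightarrow>
      fst (M i j) < fst (M i' j') \<and> snd (M i' j') < snd (M i j)"
begin

lemma M_mono:
  "\<lbrakk>i \<le> i'; j \<le> j'; i' < n; j' < n\<rbrakk> \<Longrightarrow>
    fst (M i j) \<le> fst (M i' j') \<and> snd (M i' j') \<le> snd (M i j)"
  using M_strict_mono[of i i' j j'] by (cases "(i, j) = (i', j')") auto

lemma M_mono_lex: "\<lbrakk>i \<le> i'; j \<le> j'; i' < n; j' < n\<rbrakk> \<Longrightarrow> M i j \<le> M i' j'"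
  using M_strict_mono[of i i' j j'] by (cases "(i, j) = (i', j')") (auto simp: less_eq_prod_def)

lemma in_quadrant_mono:
  "\<lbrakk>in_quadrant xmin ymax (M i j); i \<le> i'; j \<le> j'; i' < n; j' < n\<rbrakk> \<Longrightarrow>
    in_quadrant xmin ymax (M i' j')"
  using M_mono[of i i' j j'] by (auto simp: in_quadrant_def)

definition entries_in :: "nat set \<Rightarrow> point set" where
  "entries_in J = {M i j | i j. i < n \<and> j \<in> J}"

abbreviation entries :: "point set" where
  "entries \<equiv> entries_in {..<n}"

definition frontier :: "point set" where
  "frontier = {c \<in> entries. \<not> (\<exists>d\<in>entries. dominates d c)}"

lemma finite_entries_in [simp]: "finite J \<Longrightarrow> finite (entries_in J)"
proof -
  assume "finite J"
  moreover have "entries_in J = (\<lambda>(i, j). M i j) ` ({..<n} \<times> J)"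
    unfolding entries_in_def by auto
  ultimately show ?thesis by simp
qed

lemma entries_in_Un: "entries_in (J \<union> J') = entries_in J \<union> entries_in J'"
  unfolding entries_in_def by blast

lemma finite_frontier: "finite frontier"
  using finite_entries_in[of "{..<n}"] unfolding frontier_def by simp

lemma climb_le_quadrant_row:
  assumes "climb M j xmin ymax i = (i', c)" "i < n" "j < n"
    and "r < n" "in_quadrant xmin ymax (M r j)"
  shows "i' \<le> r"
proof (rule ccontr)
  assume "\<not> i' \<le> r"
  moreover note climbed = climb_result[OF assms(1)]
  ultimately have "r \<le> i' - 1" "i' - 1 < n"
    using assms(2) by auto
  then have "in_quadrant xmin ymax (M (i' - 1) j)"
    using in_quadrant_mono[OF assms(5) _ order.refl _ assms(3)] by simp
  with climbed \<open>\<not> i' \<le> r\<close> show False by simp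
qed

lemma climb_column:
  assumes "i < n" "j < n" "i = n - 1 \<or> in_quadrant xmin ymax (M i j)"
    and "climb M j xmin ymax i = (i', c)"
  shows "i' \<le> i" "c = i - i'" "i' = n - 1 \<or> in_quadrant xmin ymax (M i' j)"
    and "Min_opt ({M i' j} \<inter> Collect (in_range xmin xmax ymin ymax))
           = Min_opt (entries_in {j} \<inter> Collect (in_range xmin xmax ymin ymax))"
proof -
  note climbed = climb_result[OF assms(4)]
  show "i' \<le> i" "c = i - i'" "i' = n - 1 \<or> in_quadrant xmin ymax (M i' j)"
    using climbed assms(3) by (auto simp: le_less)
  let ?R = "Collect (in_range xmin xmax ymin ymax)"
  have i'_n: "i' < n"
    using climbed assms(1) by simp
  note i'_le = climb_le_quadrant_row[OF assms(4,1,2)]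
  have least: "M i' j \<in> ?R \<and> (\<forall>q \<in> entries_in {j} \<inter> ?R. M i' j \<le> q)"
    if r: "r < n" "M r j \<in> ?R" for r
  proof -
    have quadrant_r: "in_quadrant xmin ymax (M r j)"
      using r by (simp add: in_range_def in_quadrant_def)
    have "in_quadrant xmin ymax (M i' j)"
      using climbed assms(3) i'_le[OF r(1) quadrant_r] r(1) quadrant_r
      by (cases "i' < i") (auto simp: le_less)
    then have "M i' j \<in> ?R"
      using M_mono[OF i'_le[OF r(1) quadrant_r] order.refl r(1) assms(2)] r(2)
      by (auto simp: in_range_def in_quadrant_def)
    moreover have "M i' j \<le> q" if "q \<in> entries_in {j} \<inter> ?R" for q
      using that i'_le M_mono_lex[of i' _ j j] assms(2)
      by (auto simp: entries_in_def in_range_def in_quadrant_def)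
    ultimately show ?thesis by blast
  qed
  show "Min_opt ({M i' j} \<inter> ?R) = Min_opt (entries_in {j} \<inter> ?R)"
  proof (cases "\<exists>r<n. M r j \<in> ?R")
    case True
    then obtain r where "r < n" "M r j \<in> ?R" by blast
    with least have "Min (entries_in {j} \<inter> ?R) = M i' j"
      using i'_n finite_entries_in[of "{j}"] by (intro Min_eqI) (auto simp: entries_in_def)
    then show ?thesis
      using least \<open>r < n\<close> \<open>M r j \<in> ?R\<close> by (auto simp: Min_opt_def entries_in_def)
  next
    case False
    then show ?thesis
      using i'_n by (auto simp: Min_opt_def entries_in_def)
  qed
qed

lemma sweep_result:
  assumes "sorted js" "\<forall>j\<in>set js. j < n" "i < n"
    and "i = n - 1 \<or> (\<forall>j\<in>set js. in_quadrant xmin ymax (M i j))"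
    and "sweep M xmin xmax ymin ymax js i cand = (r, c)"
  shows "r = Min_opt (set_option cand \<union> entries_in (set js) \<inter> Collect (in_range xmin xmax ymin ymax))
    \<and> c \<le> i + length js + 1"
  using assms
proof (induction js arbitrary: i cand r c)
  case Nil
  then show ?case by (simp add: entries_in_def)
next
  case (Cons j js)
  let ?R = "Collect (in_range xmin xmax ymin ymax)"
  obtain i' c1 where climb: "climb M j xmin ymax i = (i', c1)" by fastforce
  define cand' where "cand' = Min_opt (set_option cand \<union> ({M i' j} \<inter> ?R))"
  obtain r' c2 where rest: "sweep M xmin xmax ymin ymax js i' cand' = (r', c2)" by fastforce
  have result: "r = r'" "c = c1 + c2 + 1"
    using Cons.prems(5) climb rest
    by (simp_all add: cand'_def candidate_update_eq_Min_opt[of "in_range xmin xmax ymin ymax"])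
  note column = climb_column[OF Cons.prems(3) _ _ climb]
  have j: "j < n" "i = n - 1 \<or> in_quadrant xmin ymax (M i j)"
    using Cons.prems(2,4) by auto
  have invariant: "i' = n - 1 \<or> (\<forall>j'\<in>set js. in_quadrant xmin ymax (M i' j'))"
    using column(3)[OF j] column(1)[OF j] Cons.prems(1-3) in_quadrant_mono[of xmin ymax i' j i']
    by auto
  have IH: "r' = Min_opt (set_option cand' \<union> entries_in (set js) \<inter> ?R)" "c2 \<le> i' + length js + 1"
    using Cons.IH[OF _ _ _ invariant rest] Cons.prems(1-3) column(1)[OF j] by auto
  have "cand' = Min_opt (set_option (Min_opt ({M i' j} \<inter> ?R)) \<union> set_option cand)"
    unfolding cand'_def by (subst Min_opt_Un) (auto simp: Un_commute)
  also have "\<dots> = Min_opt (set_option (Min_opt (entries_in {j} \<inter> ?R)) \<union> set_option cand)"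
    unfolding column(4)[OF j] ..
  also have "\<dots> = Min_opt (set_option cand \<union> entries_in {j} \<inter> ?R)"
    by (subst Min_opt_Un) (auto simp: Un_commute)
  finally have "r = Min_opt (set_option cand \<union> entries_in {j} \<inter> ?R \<union> entries_in (set js) \<inter> ?R)"
    using IH(1) result(1) by (simp add: Min_opt_Un)
  moreover have "entries_in (set (j # js)) = entries_in {j} \<union> entries_in (set js)"
    using entries_in_Un[of "{j}" "set js"] by simp
  ultimately show ?case
    using IH(2) result(2) column(1,2)[OF j] by (simp add: Int_Un_distrib2 Un_assoc)
qed

lemma range_min_result:
  assumes "range_min M n xmin xmax ymin ymax = (r, c)"
  shows "r = Min_opt (entries \<inter> Collect (in_range xmin xmax ymin ymax))" "c \<le> 2 * n"
proof -
  have "sweep M xmin xmax ymin ymax [0..<n] (n - 1) None = (r, c)"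
    using assms by (simp add: range_min_def)
  from sweep_result[OF _ _ _ _ this] n_pos
  show "r = Min_opt (entries \<inter> Collect (in_range xmin xmax ymin ymax))" "c \<le> 2 * n"
    by (simp_all add: atLeast0LessThan)
qed

lemma leftmost_entry:
  assumes "e \<in> entries" "e \<noteq> M 0 0"
  shows "fst (M 0 0) < fst e \<and> snd e < snd (M 0 0)"
proof -
  obtain i j where "i < n" "j < n" "e = M i j" "(i, j) \<noteq> (0, 0)"
    using assms unfolding entries_in_def by blast
  then show ?thesis using M_strict_mono[of 0 i 0 j] by simp
qed

lemma lowest_entry:
  assumes "e \<in> entries" "e \<noteq> M (n - 1) (n - 1)"
  shows "fst e < fst (M (n - 1) (n - 1)) \<and> snd (M (n - 1) (n - 1)) < snd e"
proof -
  obtain i j where "i < n" "j < n" "e = M i j" "(i, j) \<noteq> (n - 1, n - 1)"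
    using assms unfolding entries_in_def by blast
  then show ?thesis using M_strict_mono[of i "n - 1" j "n - 1"] by simp
qed

lemma corners_in_frontier: "M 0 0 \<in> frontier" "M (n - 1) (n - 1) \<in> frontier"
  using leftmost_entry lowest_entry n_pos
  by (fastforce simp: frontier_def dominates_def entries_in_def)+

lemma Min_in_window_in_frontier:
  assumes "(xmin, ymax) \<in> frontier" "\<forall>e\<in>entries. ymin \<le> snd e"
    and "Min_opt (entries \<inter> Collect (in_range xmin xmax ymin ymax)) = Some m"
  shows "m \<in> frontier"
proof -
  have m: "m \<in> entries" "in_range xmin xmax ymin ymax m"
    and least: "\<And>q. q \<in> entries \<Longrightarrow> in_range xmin xmax ymin ymax q \<Longrightarrow> m \<le> q"
    using assms(3) by (auto simp: Min_opt_eq_Some_iff)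
  have "\<not> dominates d m" if d: "d \<in> entries" for d
  proof
    assume dm: "dominates d m"
    show False
    proof (cases "xmin \<le> fst d")
      case True
      then have "in_range xmin xmax ymin ymax d"
        using assms(2) d dm m(2) by (auto simp: in_range_def dominates_def)
      then have "m \<le> d" using least d by blast
      moreover have "d < m"
        using dm by (auto simp: dominates_def less_prod_def' prod_eq_iff)
      ultimately show False by simp
    next
      case False
      then have "dominates d (xmin, ymax)"
        using dm m(2) by (auto simp: in_range_def dominates_def)
      with assms(1) d show False by (auto simp: frontier_def)
    qed
  qed
  with m show ?thesis by (simp add: frontier_def)
qed

lemma frontier_window_shrink:
  assumes "m \<in> frontier" "Min_opt (entries \<inter> Collect (in_range xmin xmax ymin ymax)) = Some m"
  shows "frontier \<inter> Collect (in_range (fst m) xmax ymin (snd m))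
           = frontier \<inter> Collect (in_range xmin xmax ymin ymax) - {m}"
proof -
  have m: "in_range xmin xmax ymin ymax m"
    and least: "\<And>q. q \<in> entries \<Longrightarrow> in_range xmin xmax ymin ymax q \<Longrightarrow> m \<le> q"
    using assms(2) by (auto simp: Min_opt_eq_Some_iff)
  have strict: "fst m < fst q \<and> snd q < snd m"
    if "q \<in> frontier" "in_range xmin xmax ymin ymax q" "q \<noteq> m" for q
  proof -
    have "m \<le> q" "\<not> dominates m q"
      using that least assms(1) by (auto simp: frontier_def)
    with \<open>q \<noteq> m\<close> show ?thesis
      by (auto simp: dominates_def less_eq_prod_def)
  qed
  show ?thesis
  proof (intro set_eqI iffI)
    fix q
    assume "q \<in> frontier \<inter> Collect (in_range (fst m) xmax ymin (snd m))"
    with m show "q \<in> frontier \<inter> Collect (in_range xmin xmax ymin ymax) - {m}"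
      by (auto simp: in_range_def)
  next
    fix q
    assume "q \<in> frontier \<inter> Collect (in_range xmin xmax ymin ymax) - {m}"
    with strict[of q] show "q \<in> frontier \<inter> Collect (in_range (fst m) xmax ymin (snd m))"
      by (auto simp: in_range_def)
  qed
qed

lemma window_step:
  assumes "(xmin, ymax) \<in> frontier" "\<forall>e\<in>entries. ymin \<le> snd e"
    and "frontier \<inter> Collect (in_range xmin xmax ymin ymax) = frontier - set C"
    and "Min_opt (entries \<inter> Collect (in_range xmin xmax ymin ymax)) = Some m"
  shows "m \<in> frontier - set C"
    and "frontier \<inter> Collect (in_range (fst m) xmax ymin (snd m)) = frontier - set (m # C)"
proof -
  have m: "m \<in> frontier"
    using Min_in_window_in_frontier[OF assms(1,2,4)] .
  moreover have "in_range xmin xmax ymin ymax m"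
    using assms(4) by (simp add: Min_opt_eq_Some_iff)
  ultimately show "m \<in> frontier - set C"
    using assms(3) by blast
  show "frontier \<inter> Collect (in_range (fst m) xmax ymin (snd m)) = frontier - set (m # C)"
    using frontier_window_shrink[OF m assms(4)] assms(3) by auto
qed

(* The bound on length C allows for the initial list [M 0 0, M (n - 1) (n - 1)],
   whose two entries coincide when n = 1. *)
lemma sss_loop_result:
  assumes "(xmin, ymax) \<in> frontier" "\<forall>e\<in>entries. ymin \<le> snd e" "set C \<subseteq> frontier"
    and "frontier \<inter> Collect (in_range xmin xmax ymin ymax) = frontier - set C"
    and "length C \<le> card (set C) + 1"
    and "sss_loop M n xmax ymin xmin ymax C t s = (C', t', s')"
  shows "set C' = frontier \<and> t' \<le> t + (card (frontier - set C) + 1) * (2 * n + 1)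
    \<and> s' \<le> max s (2 * n + card frontier + 9)"
  using assms
proof (induction "card (frontier - set C)" arbitrary: xmin ymax C t s rule: less_induct)
  case less
  obtain r c where range_min: "range_min M n xmin xmax ymin ymax = (r, c)" by fastforce
  note r = range_min_result[OF range_min]
  note loop = sss_loop_unfold[OF range_min, of C t s]
  have space: "2 * n + length C + 8 \<le> 2 * n + card frontier + 9"
    using less.prems(3,5) card_mono[OF finite_frontier less.prems(3)] by simp
  show ?case
  proof (cases r)
    case None
    then have "frontier \<inter> Collect (in_range xmin xmax ymin ymax) = {}"
      using r(1) by (auto simp: Min_opt_def frontier_def split: if_splits)
    then show ?thesis
      using less.prems(3,4,6) loop None r(2) space by auto
  next
    case (Some m)
    have "Min_opt (entries \<inter> Collect (in_range xmin xmax ymin ymax)) = Some m"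
      using r(1) Some by simp
    note step = window_step[OF less.prems(1,2,4) this]
    have "frontier - set (m # C) = frontier - set C - {m}"
      by auto
    then have card: "card (frontier - set C) = card (frontier - set (m # C)) + 1"
      using card_Suc_Diff1[of "frontier - set C" m] finite_frontier step(1) by simp
    have "set C' = frontier \<and>
        t' \<le> t + c + 1 + (card (frontier - set (m # C)) + 1) * (2 * n + 1) \<and>
        s' \<le> max (max s (2 * n + length C + 8)) (2 * n + card frontier + 9)"
    proof (rule less.hyps[OF _ _ less.prems(2) _ step(2)])
      show "card (frontier - set (m # C)) < card (frontier - set C)"
        using card by simp
      show "(fst m, snd m) \<in> frontier" "set (m # C) \<subseteq> frontier"
        using step(1) less.prems(3) by auto
      show "length (m # C) \<le> card (set (m # C)) + 1"
        using less.prems(5) step(1) by simp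
      show "sss_loop M n xmax ymin (fst m) (snd m) (m # C) (t + c + 1)
          (max s (2 * n + length C + 8)) = (C', t', s')"
        using less.prems(6) loop Some by simp
    qed
    moreover have "(card (frontier - set C) + 1) * (2 * n + 1)
        = (card (frontier - set (m # C)) + 1) * (2 * n + 1) + (2 * n + 1)"
      unfolding card by simp
    ultimately show ?thesis
      using r(2) space by linarith
  qed
qed

lemma sss_run_result:
  assumes "sss_loop M n (fst (M (n - 1) (n - 1))) (snd (M (n - 1) (n - 1)))
      (fst (M 0 0)) (snd (M 0 0)) [M 0 0, M (n - 1) (n - 1)] 0 0 = (C, t, s)"
  shows "set C = frontier" "t \<le> (card frontier + 1) * (2 * n + 1)"
    and "s \<le> 2 * n + card frontier + 9"
proof -
  let ?C = "[M 0 0, M (n - 1) (n - 1)]"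
  have frontier_entries: "frontier \<subseteq> entries"
    by (auto simp: frontier_def)
  have "\<forall>e\<in>entries. snd (M (n - 1) (n - 1)) \<le> snd e"
    using lowest_entry by (metis less_eq_real_def)
  moreover have "frontier \<inter> Collect (in_range (fst (M 0 0)) (fst (M (n - 1) (n - 1)))
      (snd (M (n - 1) (n - 1))) (snd (M 0 0))) = frontier - set ?C" (is "_ \<inter> ?R = _")
  proof (intro set_eqI iffI)
    fix q
    assume "q \<in> frontier \<inter> ?R"
    then show "q \<in> frontier - set ?C"
      by (auto simp: in_range_def)
  next
    fix q
    assume q: "q \<in> frontier - set ?C"
    with frontier_entries have "q \<in> entries" by blast
    with q leftmost_entry[of q] lowest_entry[of q] show "q \<in> frontier \<inter> ?R"
      by (simp add: in_range_def)
  qed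
  moreover have "length ?C \<le> card (set ?C) + 1"
    by (cases "M 0 0 = M (n - 1) (n - 1)") simp_all
  ultimately have "set C = frontier \<and> t \<le> (card (frontier - set ?C) + 1) * (2 * n + 1)
      \<and> s \<le> 2 * n + card frontier + 9"
    using sss_loop_result[of "fst (M 0 0)" "snd (M 0 0)" _ ?C, OF _ _ _ _ _ assms] corners_in_frontier
    by simp
  moreover have "(card (frontier - set ?C) + 1) * (2 * n + 1) \<le> (card frontier + 1) * (2 * n + 1)"
    using finite_frontier by (intro mult_le_mono1) (simp add: card_mono)
  ultimately show "set C = frontier" "t \<le> (card frontier + 1) * (2 * n + 1)"
      "s \<le> 2 * n + card frontier + 9"
    by (blast intro: order.trans)+
qed

lemma card_frontier_pos: "0 < card frontier"
  using corners_in_frontier(1) finite_frontier card_gt_0_iff by blast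

end

lemma sorted_pareto_matrix_padd:
  assumes "sorted as" "distinct as" "is_pareto (set as)"
    and "sorted bs" "distinct bs" "is_pareto (set bs)"
    and "length as = n" "length bs = n" "0 < n"
  shows "sorted_pareto_matrix (\<lambda>i j. padd (as ! i) (bs ! j)) n"
proof
  fix i i' j j'
  assume "i \<le> i'" "j \<le> j'" "(i, j) \<noteq> (i', j')" "i' < n" "j' < n"
  then show "fst (padd (as ! i) (bs ! j)) < fst (padd (as ! i') (bs ! j')) \<and>
      snd (padd (as ! i') (bs ! j')) < snd (padd (as ! i) (bs ! j))"
    using sorted_pareto_nth_less[OF assms(1-3), of i i'] sorted_pareto_nth_less[OF assms(4-6), of j j']
      assms(7,8)
    by (cases "i = i'"; cases "j = j'") (auto simp: padd_def)
qed (rule assms(9))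

lemma minkowski_sum_nth:
  "minkowski_sum (set as) (set bs) = {padd (as ! i) (bs ! j) | i j. i < length as \<and> j < length bs}"
  unfolding minkowski_sum_def in_set_conv_nth by blast

section \<open>Correctness and complexity\<close>

lemma sss_loop_analysis:
  assumes "distinct as" "distinct bs" "is_pareto (set as)" "is_pareto (set bs)"
    and "length as = length bs" "as \<noteq> []"
  defines "n \<equiv> length as" and "k \<equiv> card (pareto_sum (set as) (set bs))"
  obtains ta tb t s where "snd (msort_c as) = ta" "snd (msort_c bs) = tb"
    and "set (sss_output as bs) = pareto_sum (set as) (set bs)" "0 < k"
    and "sss_time as bs = ta + tb + t + 1" "t \<le> (k + 1) * (2 * n + 1)"
    and "sss_space as bs = max (max (msort_space as + n) (n + msort_space bs)) s"
    and "s \<le> 2 * n + k + 9"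
proof -
  obtain sa ta sb tb where sort: "msort_c as = (sa, ta)" "msort_c bs = (sb, tb)"
    by fastforce
  note sa = msort_c_sorts[OF assms(1) sort(1)]
  note sb = msort_c_sorts[OF assms(2) sort(2)]
  have n: "0 < n" "length sa = n" "length sb = n"
    using assms(5,6) sa(4) sb(4) unfolding n_def by auto
  define M where "M = (\<lambda>i j. padd (sa ! i) (sb ! j))"
  interpret sorted_pareto_matrix M n
    unfolding M_def using sa sb n assms(3,4) by (intro sorted_pareto_matrix_padd) simp_all
  obtain C t s where loop: "sss_loop M n (fst (M (n - 1) (n - 1))) (snd (M (n - 1) (n - 1)))
      (fst (M 0 0)) (snd (M 0 0)) [M 0 0, M (n - 1) (n - 1)] 0 0 = (C, t, s)"
    by (metis prod_cases3)
  have sss: "sss as bs = (C, ta + tb + t + 1, max (max (msort_space as + n) (n + msort_space bs)) s)"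
    using loop sort n assms(5) unfolding sss_def M_def n_def by (simp add: Let_def)
  have "minkowski_sum (set as) (set bs) = entries"
    using minkowski_sum_nth[of sa sb] sa(3) sb(3) n unfolding entries_in_def by (auto simp: M_def)
  then have frontier: "pareto_sum (set as) (set bs) = frontier"
    by (simp add: pareto_sum_def frontier_def)
  show ?thesis
  proof
    show "snd (msort_c as) = ta" "snd (msort_c bs) = tb"
      using sort by simp_all
    show "sss_time as bs = ta + tb + t + 1"
      "sss_space as bs = max (max (msort_space as + n) (n + msort_space bs)) s"
      using sss by (simp_all add: sss_time_def sss_space_def)
    show "set (sss_output as bs) = pareto_sum (set as) (set bs)"
      "t \<le> (k + 1) * (2 * n + 1)" "s \<le> 2 * n + k + 9"
      using sss_run_result[OF loop] sss frontier by (simp_all add: sss_output_def k_def)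
    show "0 < k"
      using card_frontier_pos frontier by (simp add: k_def)
  qed
qed

lemma sss_cost_bounds:
  assumes "distinct as" "distinct bs" "is_pareto (set as)" "is_pareto (set bs)"
    and "length as = length bs" "as \<noteq> []" "length as \<le> 2 ^ d"
  defines "n \<equiv> length as" and "k \<equiv> card (pareto_sum (set as) (set bs))"
  shows "sss_time as bs \<le> 8 * n * (d + 1) + (k + 1) * (2 * n + 1) + 1"
    and "sss_space as bs \<le> 4 * n + k + 9"
proof -
  obtain ta tb t s where loop: "snd (msort_c as) = ta" "snd (msort_c bs) = tb"
    "sss_time as bs = ta + tb + t + 1" "t \<le> (k + 1) * (2 * n + 1)"
    "sss_space as bs = max (max (msort_space as + n) (n + msort_space bs)) s"
    "s \<le> 2 * n + k + 9"
    using sss_loop_analysis[OF assms(1-6)] unfolding n_def k_def by metis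
  have "1 \<le> length as"
    using assms(6) by (simp add: Suc_le_eq)
  moreover have "1 \<le> length bs"
    using calculation assms(5) by simp
  ultimately have "ta \<le> 4 * n * (d + 1)" "tb \<le> 4 * n * (d + 1)"
    and "msort_space as \<le> 3 * n" "msort_space bs \<le> 3 * n"
    using msort_c_cost[of as d] msort_c_cost[of bs d] msort_space_le[of as] msort_space_le[of bs]
      assms(5,7) loop(1,2)
    by (simp_all add: n_def)
  with loop(3-6) show "sss_time as bs \<le> 8 * n * (d + 1) + (k + 1) * (2 * n + 1) + 1"
    and "sss_space as bs \<le> 4 * n + k + 9"
    by linarith+
qed

lemma log2_ceiling_bound:
  fixes n :: nat
  assumes "0 < n"
  obtains d where "n \<le> 2 ^ d" "real d \<le> log 2 n + 1"
proof
  have log_nonneg: "0 \<le> log 2 n"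
    using assms by simp
  have "real n = 2 powr log 2 n"
    using assms by simp
  also have "\<dots> \<le> 2 powr real (nat \<lceil>log 2 n\<rceil>)"
    using log_nonneg by (intro powr_mono) auto
  finally show "n \<le> 2 ^ nat \<lceil>log 2 n\<rceil>"
    by (simp add: powr_realpow)
  show "real (nat \<lceil>log 2 n\<rceil>) \<le> log 2 n + 1"
    using log_nonneg by linarith
qed

lemma cost_le_n_log_n_plus_n_k:
  fixes n k d :: nat
  assumes "0 < n" "0 < k" "real d \<le> log 2 n + 1"
  shows "real (8 * n * (d + 1) + (k + 1) * (2 * n + 1) + 1) \<le> 30 * (n * log 2 n + n * k)"
proof -
  have "n \<le> n * k" "k \<le> n * k" "1 \<le> n * k"
    using assms(1,2) by simp_all
  moreover have "8 * n * (d + 1) + (k + 1) * (2 * n + 1) + 1 = 8 * (n * d) + 2 * (n * k) + 10 * n + k + 2"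
    by (simp add: algebra_simps)
  ultimately have "8 * n * (d + 1) + (k + 1) * (2 * n + 1) + 1 \<le> 8 * (n * d) + 15 * (n * k)"
    by linarith
  then have "real (8 * n * (d + 1) + (k + 1) * (2 * n + 1) + 1) \<le> 8 * (n * real d) + 15 * (n * k)"
    by (metis of_nat_add of_nat_le_iff of_nat_mult of_nat_numeral)
  also have "\<dots> \<le> 8 * (n * log 2 n) + 8 * n + 15 * (n * k)"
    using mult_left_mono[OF assms(3), of "real n"] by (simp add: algebra_simps)
  also have "\<dots> \<le> 30 * (n * log 2 n + n * k)"
  proof -
    have "real n \<le> real n * real k"
      using \<open>n \<le> n * k\<close> by (metis of_nat_le_iff of_nat_mult)
    moreover have "0 \<le> real n * log 2 n"
      using assms(1) by simp
    ultimately show ?thesis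
      by (simp add: algebra_simps)
  qed
  finally show ?thesis .
qed

theorem mainTheorem9:
  "\<exists>c::real. \<forall>(as::point list) (bs::point list).
     distinct as \<and> distinct bs \<and> is_pareto (set as) \<and> is_pareto (set bs) \<and>
     length as = length bs \<and> as \<noteq> [] \<longrightarrow>
       (let n = length as; k = card (pareto_sum (set as) (set bs)) in
          set (sss_output as bs) = pareto_sum (set as) (set bs) \<and>
          real (sss_time as bs) \<le> c * (real n * log 2 (real n) + real n * real k) \<and>
          real (sss_space as bs) \<le> c * (real n + real k))"
proof (intro exI[of _ 30] allI impI)
  fix as bs :: "point list"
  assume "distinct as \<and> distinct bs \<and> is_pareto (set as) \<and> is_pareto (set bs) \<and>
     length as = length bs \<and> as \<noteq> []"
  then have hyps: "distinct as" "distinct bs" "is_pareto (set as)" "is_pareto (set bs)"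
      "length as = length bs" "as \<noteq> []"
    by simp_all
  define n where "n = length as"
  define k where "k = card (pareto_sum (set as) (set bs))"
  have "0 < n" "0 < k"
    using hyps(6) sss_loop_analysis[OF hyps] by (auto simp: n_def k_def)
  then obtain d where d: "n \<le> 2 ^ d" "real d \<le> log 2 n + 1"
    using log2_ceiling_bound by blast
  have "real (sss_time as bs) \<le> 30 * (n * log 2 n + n * k)"
    using sss_cost_bounds(1)[OF hyps, of d] cost_le_n_log_n_plus_n_k[OF \<open>0 < n\<close> \<open>0 < k\<close> d(2)] d(1)
    unfolding n_def k_def by (meson of_nat_le_iff order.trans)
  moreover have "sss_space as bs \<le> 30 * (n + k)"
    using sss_cost_bounds(2)[OF hyps, of d] d(1) \<open>0 < n\<close> \<open>0 < k\<close> by (simp add: n_def k_def)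
  then have "real (sss_space as bs) \<le> 30 * (n + k)"
    by (metis of_nat_add of_nat_le_iff of_nat_mult of_nat_numeral)
  ultimately show "let n = length as; k = card (pareto_sum (set as) (set bs)) in
      set (sss_output as bs) = pareto_sum (set as) (set bs) \<and>
      real (sss_time as bs) \<le> 30 * (real n * log 2 (real n) + real n * real k) \<and>
      real (sss_space as bs) \<le> 30 * (real n + real k)"
    using sss_loop_analysis[OF hyps] by (auto simp: n_def k_def)
qed

end
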